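(* In the planar algebra $\mathcal P$ described in the context: (i) $P_4S=SP_4=-2P_4$; (ii) $Q_4S=SQ_4=3Q_4$; (iii) $P_5(S\otimes X)=(S\otimes X)P_5=-2P_5$; (iv) $P_6(S\otimes X^{\otimes2})=(S\otimes X^{\otimes2})P_6=-2P_6$.
   Context: $\mathcal P$ is the unshaded planar algebra generated by a self-adjoint $S\in\mathcal P_4$ modulo: (i) a closed loop equals $2$; (ii) $S$ is uncuppable, uncappable and unsidecappable; (iii) $S^2=6f^{(4)}+S$; (iv) jellyfish relation: the rainbowed $S$ with an extra strand above it equals the same with the strand passing below the box, crossing over its 8 strands; crossings defined by crossing $=i\cdot(\text{A-smoothing})-i\cdot(\text{B-smoothing})$. Multiplication is vertical stacking, $\otimes$ horizontal juxtaposition, $X$ a single strand, $e_k$ the Temperley–Lieb diagram with a cap and cup at positions $k,k+1$. Jones–Wenzl: $f^{(1)}=X$, $f^{(k+1)}=f^{(k)}\otimes X-\frac{k}{k+1}(f^{(k)}\otimes X)e_k(f^{(k)}\otimes X)$. $P_4=\frac35f^{(4)}-\frac15S$, $Q_4=\frac25f^{(4)}+\frac15S$, $P_5=P_4\otimes X-\frac43(P_4\otimes X)e_4(P_4\otimes X)$, $P_6=P_5\otimes X-\frac32(P_5\otimes X)e_5(P_5\otimes X)$. *)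

theory Defs
  imports Complex_Main
begin

text \<open>
  An unshaded planar algebra with loop value 2 is encoded as a strict pivotal
  (complex-linear, dagger) category generated by one symmetrically self-dual object
  (a single strand).  The morphisms of all hom-spaces live in one abelian group 'm,
  with complex scalar multiplication pa_scale A (a complex-linear structure on each hom-space); membership in the hom-space from m bottom strands to n top strands is
  given by pa_hom A m n.  pa_mul A a b is vertical stacking (a drawn on top of b),
  pa_tens A a b is horizontal juxtaposition (a to the left of b).
\<close>

record 'm pa_ops =
  pa_hom  :: "nat \<Rightarrow> nat \<Rightarrow> 'm set"
  pa_mul  :: "'m \<Rightarrow> 'm \<Rightarrow> 'm"
  pa_tens :: "'m \<Rightarrow> 'm \<Rightarrow> 'm"
  pa_id   :: "nat \<Rightarrow> 'm"
  pa_cap  :: "'m"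
  pa_cup  :: "'m"
  pa_star :: "'m \<Rightarrow> 'm"
  pa_scale :: "complex \<Rightarrow> 'm \<Rightarrow> 'm"

definition X :: "'m pa_ops \<Rightarrow> 'm" where
  "X A = pa_id A 1"

definition e :: "'m pa_ops \<Rightarrow> nat \<Rightarrow> nat \<Rightarrow> 'm" where
  "e A n k = pa_tens A (pa_tens A (pa_id A (k - 1)) (pa_mul A (pa_cup A) (pa_cap A)))
                       (pa_id A (n - k - 1))"

text \<open>Jones--Wenzl idempotents (jw A 0 is an unused convention).\<close>
fun jw :: "'m::ab_group_add pa_ops \<Rightarrow> nat \<Rightarrow> 'm" where
  "jw A 0 = pa_id A 0"
| "jw A (Suc 0) = X A"
| "jw A (Suc (Suc k)) =
     pa_tens A (jw A (Suc k)) (X A)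
     - pa_scale A (of_nat (Suc k) / of_nat (Suc (Suc k)))
         (pa_mul A (pa_mul A (pa_tens A (jw A (Suc k)) (X A)) (e A (Suc (Suc k)) (Suc k)))
                  (pa_tens A (jw A (Suc k)) (X A)))"

text \<open>Crossing = i (A-smoothing) - i (B-smoothing); A-smoothing taken to be the
  vertical identity smoothing, B-smoothing the cup-cap smoothing.\<close>
definition crossing :: "'m::ab_group_add pa_ops \<Rightarrow> 'm" where
  "crossing A = pa_scale A \<i> (pa_id A 2) - pa_scale A \<i> (pa_mul A (pa_cup A) (pa_cap A))"

fun cups :: "'m pa_ops \<Rightarrow> nat \<Rightarrow> 'm" where
  "cups A 0 = pa_id A 0"
| "cups A (Suc n) = pa_mul A (pa_tens A (pa_tens A (X A) (cups A n)) (X A)) (pa_cup A)"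

text \<open>A strand entering at the right of n strands crosses over all of them to the left.\<close>
fun braid_left :: "'m::ab_group_add pa_ops \<Rightarrow> nat \<Rightarrow> 'm" where
  "braid_left A 0 = pa_id A 1"
| "braid_left A (Suc n) =
     pa_mul A (pa_tens A (braid_left A n) (X A)) (pa_tens A (pa_id A n) (crossing A))"

text \<open>Rainbowed S: bottom legs bent up, all 8 endpoints on top (hom 0 8).\<close>
definition rainbow :: "'m pa_ops \<Rightarrow> 'm \<Rightarrow> 'm" where
  "rainbow A S = pa_mul A (pa_tens A S (pa_id A 4)) (cups A 4)"

locale tl_pivotal =
  fixes A :: "'m::ab_group_add pa_ops"
  assumes hom_add: "\<And>a b m n. a \<in> pa_hom A m n \<Longrightarrow> b \<in> pa_hom A m n \<Longrightarrow> a + b \<in> pa_hom A m n"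
    and hom_scale: "\<And>a c m n. a \<in> pa_hom A m n \<Longrightarrow> pa_scale A c a \<in> pa_hom A m n"
    and scale_add_left: "\<And>a r s m n. a \<in> pa_hom A m n \<Longrightarrow> pa_scale A (r + s) a = pa_scale A r a + pa_scale A s a"
    and scale_add_right: "\<And>a b r m n. a \<in> pa_hom A m n \<Longrightarrow> b \<in> pa_hom A m n \<Longrightarrow> pa_scale A r (a + b) = pa_scale A r a + pa_scale A r b"
    and scale_mult: "\<And>a r s m n. a \<in> pa_hom A m n \<Longrightarrow> pa_scale A (r * s) a = pa_scale A r (pa_scale A s a)"
    and scale_one: "\<And>a m n. a \<in> pa_hom A m n \<Longrightarrow> pa_scale A 1 a = a"
    and mul_hom: "\<And>a b m n k. a \<in> pa_hom A n k \<Longrightarrow> b \<in> pa_hom A m n \<Longrightarrow> pa_mul A a b \<in> pa_hom A m k"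
    and tens_hom: "\<And>a b m n p q. a \<in> pa_hom A m n \<Longrightarrow> b \<in> pa_hom A p q \<Longrightarrow>
                     pa_tens A a b \<in> pa_hom A (m + p) (n + q)"
    and id_hom: "\<And>n. pa_id A n \<in> pa_hom A n n"
    and mul_assoc: "\<And>a b c m n k l. a \<in> pa_hom A k l \<Longrightarrow> b \<in> pa_hom A n k \<Longrightarrow> c \<in> pa_hom A m n \<Longrightarrow>
                     pa_mul A (pa_mul A a b) c = pa_mul A a (pa_mul A b c)"
    and id_left: "\<And>a m n. a \<in> pa_hom A m n \<Longrightarrow> pa_mul A (pa_id A n) a = a"
    and id_right: "\<And>a m n. a \<in> pa_hom A m n \<Longrightarrow> pa_mul A a (pa_id A m) = a"
    and mul_add_left: "\<And>a b c m n k. a \<in> pa_hom A n k \<Longrightarrow> b \<in> pa_hom A n k \<Longrightarrow> c \<in> pa_hom A m n \<Longrightarrow>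
                     pa_mul A (a + b) c = pa_mul A a c + pa_mul A b c"
    and mul_add_right: "\<And>a b c m n k. a \<in> pa_hom A n k \<Longrightarrow> b \<in> pa_hom A m n \<Longrightarrow> c \<in> pa_hom A m n \<Longrightarrow>
                     pa_mul A a (b + c) = pa_mul A a b + pa_mul A a c"
    and mul_scale_left: "\<And>a b r m n k. a \<in> pa_hom A n k \<Longrightarrow> b \<in> pa_hom A m n \<Longrightarrow>
                     pa_mul A (pa_scale A r a) b = pa_scale A r (pa_mul A a b)"
    and mul_scale_right: "\<And>a b r m n k. a \<in> pa_hom A n k \<Longrightarrow> b \<in> pa_hom A m n \<Longrightarrow>
                     pa_mul A a (pa_scale A r b) = pa_scale A r (pa_mul A a b)"
    and tens_add_left: "\<And>a b c m n p q. a \<in> pa_hom A m n \<Longrightarrow> b \<in> pa_hom A m n \<Longrightarrow> c \<in> pa_hom A p q \<Longrightarrow>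
                     pa_tens A (a + b) c = pa_tens A a c + pa_tens A b c"
    and tens_add_right: "\<And>a b c m n p q. a \<in> pa_hom A m n \<Longrightarrow> b \<in> pa_hom A p q \<Longrightarrow> c \<in> pa_hom A p q \<Longrightarrow>
                     pa_tens A a (b + c) = pa_tens A a b + pa_tens A a c"
    and tens_scale_left: "\<And>a b r m n p q. a \<in> pa_hom A m n \<Longrightarrow> b \<in> pa_hom A p q \<Longrightarrow>
                     pa_tens A (pa_scale A r a) b = pa_scale A r (pa_tens A a b)"
    and tens_scale_right: "\<And>a b r m n p q. a \<in> pa_hom A m n \<Longrightarrow> b \<in> pa_hom A p q \<Longrightarrow>
                     pa_tens A a (pa_scale A r b) = pa_scale A r (pa_tens A a b)"
    and tens_assoc: "\<And>a b c m n p q s t. a \<in> pa_hom A m n \<Longrightarrow> b \<in> pa_hom A p q \<Longrightarrow> c \<in> pa_hom A s t \<Longrightarrow>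
                     pa_tens A (pa_tens A a b) c = pa_tens A a (pa_tens A b c)"
    and tens_unit_left: "\<And>a m n. a \<in> pa_hom A m n \<Longrightarrow> pa_tens A (pa_id A 0) a = a"
    and tens_unit_right: "\<And>a m n. a \<in> pa_hom A m n \<Longrightarrow> pa_tens A a (pa_id A 0) = a"
    and tens_id: "\<And>m n. pa_tens A (pa_id A m) (pa_id A n) = pa_id A (m + n)"
    and interchange: "\<And>a b c d m n k p q l.
                     a \<in> pa_hom A n k \<Longrightarrow> c \<in> pa_hom A m n \<Longrightarrow> b \<in> pa_hom A q l \<Longrightarrow> d \<in> pa_hom A p q \<Longrightarrow>
                     pa_mul A (pa_tens A a b) (pa_tens A c d) = pa_tens A (pa_mul A a c) (pa_mul A b d)"
    and cap_hom: "pa_cap A \<in> pa_hom A 2 0"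
    and cup_hom: "pa_cup A \<in> pa_hom A 0 2"
    and zigzag1: "pa_mul A (pa_tens A (pa_cap A) (X A)) (pa_tens A (X A) (pa_cup A)) = X A"
    and zigzag2: "pa_mul A (pa_tens A (X A) (pa_cap A)) (pa_tens A (pa_cup A) (X A)) = X A"
    and loop: "pa_mul A (pa_cap A) (pa_cup A) = pa_scale A 2 (pa_id A 0)"
    and star_hom: "\<And>a m n. a \<in> pa_hom A m n \<Longrightarrow> pa_star A a \<in> pa_hom A n m"
    and star_star: "\<And>a m n. a \<in> pa_hom A m n \<Longrightarrow> pa_star A (pa_star A a) = a"
    and star_add: "\<And>a b m n. a \<in> pa_hom A m n \<Longrightarrow> b \<in> pa_hom A m n \<Longrightarrow>
                     pa_star A (a + b) = pa_star A a + pa_star A b"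
    and star_scale: "\<And>a r m n. a \<in> pa_hom A m n \<Longrightarrow> pa_star A (pa_scale A r a) = pa_scale A (cnj r) (pa_star A a)"
    and star_mul: "\<And>a b m n k. a \<in> pa_hom A n k \<Longrightarrow> b \<in> pa_hom A m n \<Longrightarrow>
                     pa_star A (pa_mul A a b) = pa_mul A (pa_star A b) (pa_star A a)"
    and star_tens: "\<And>a b m n p q. a \<in> pa_hom A m n \<Longrightarrow> b \<in> pa_hom A p q \<Longrightarrow>
                     pa_star A (pa_tens A a b) = pa_tens A (pa_star A a) (pa_star A b)"
    and star_id: "\<And>n. pa_star A (pa_id A n) = pa_id A n"
    and star_cap: "pa_star A (pa_cap A) = pa_cup A"

locale planar_S = tl_pivotal A for A :: "'m::ab_group_add pa_ops" +
  fixes S :: 'm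
  assumes S_hom: "S \<in> pa_hom A 4 4"
    and S_selfadj: "pa_star A S = S"
    and S_uncappable: "\<And>j. j \<le> 2 \<Longrightarrow>
          pa_mul A (pa_tens A (pa_tens A (pa_id A j) (pa_cap A)) (pa_id A (2 - j))) S = 0"
    and S_uncuppable: "\<And>j. j \<le> 2 \<Longrightarrow>
          pa_mul A S (pa_tens A (pa_tens A (pa_id A j) (pa_cup A)) (pa_id A (2 - j))) = 0"
    and S_sidecap_left: "pa_mul A (pa_mul A (pa_tens A (pa_cap A) (pa_id A 3)) (pa_tens A (X A) S))
                           (pa_tens A (pa_cup A) (pa_id A 3)) = 0"
    and S_sidecap_right: "pa_mul A (pa_mul A (pa_tens A (pa_id A 3) (pa_cap A)) (pa_tens A S (X A)))
                           (pa_tens A (pa_id A 3) (pa_cup A)) = 0"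
    and S_square: "pa_mul A S S = pa_scale A 6 (jw A 4) + S"
    and jellyfish: "pa_tens A (X A) (rainbow A S) = pa_mul A (braid_left A 8) (pa_tens A (rainbow A S) (X A))"

definition P4 :: "'m::ab_group_add pa_ops \<Rightarrow> 'm \<Rightarrow> 'm" where
  "P4 A S = pa_scale A (3/5) (jw A 4) - pa_scale A (1/5) S"

definition Q4 :: "'m::ab_group_add pa_ops \<Rightarrow> 'm \<Rightarrow> 'm" where
  "Q4 A S = pa_scale A (2/5) (jw A 4) + pa_scale A (1/5) S"

definition P5 :: "'m::ab_group_add pa_ops \<Rightarrow> 'm \<Rightarrow> 'm" where
  "P5 A S = pa_tens A (P4 A S) (X A)
     - pa_scale A (4/3) (pa_mul A (pa_mul A (pa_tens A (P4 A S) (X A)) (e A 5 4)) (pa_tens A (P4 A S) (X A)))"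

definition P6 :: "'m::ab_group_add pa_ops \<Rightarrow> 'm \<Rightarrow> 'm" where
  "P6 A S = pa_tens A (P5 A S) (X A)
     - pa_scale A (3/2) (pa_mul A (pa_mul A (pa_tens A (P5 A S) (X A)) (e A 6 5)) (pa_tens A (P5 A S) (X A)))"

end

theory Submission
  imports Defs
begin

(* Each Jones-Wenzl step f' = T - c T e T only adds a term containing the cup-cap e, and S is
   killed by caps and cups from either side; so by induction f^(4) acts as the identity on S.
   Hence f^(4) and S span an algebra in which S^2 = 6 f^(4) + S: multiplication by S satisfies
   x^2 = x + 6, with eigenvalues -2 and 3, and P4, Q4 are the corresponding eigen-combinations.
   P5 and P6 arise from P4 (x) X and P5 (x) X by the same kind of step U - c U e U, and the
   sandwich U e U inherits the two-sided eigen-relation with S (x) X from its outer factors U,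
   whatever e is. *)

definition absorbs :: "'m pa_ops \<Rightarrow> 'm \<Rightarrow> 'm \<Rightarrow> bool" where
  "absorbs A T S \<longleftrightarrow> pa_mul A T S = S \<and> pa_mul A S T = S"

definition mul_eigen :: "'m pa_ops \<Rightarrow> 'm \<Rightarrow> complex \<Rightarrow> 'm \<Rightarrow> bool" where
  "mul_eigen A Y r U \<longleftrightarrow> pa_mul A U Y = pa_scale A r U \<and> pa_mul A Y U = pa_scale A r U"

context tl_pivotal
begin

lemma X_hom: "X A \<in> pa_hom A 1 1"
  unfolding X_def by (rule id_hom)

lemma scale_zero_left:
  assumes "a \<in> pa_hom A m n" shows "pa_scale A 0 a = 0"
  using scale_add_left[OF assms, of 0 0] by simp

lemma scale_minus_left:
  assumes "a \<in> pa_hom A m n" shows "pa_scale A (- r) a = - pa_scale A r a"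
  using scale_add_left[OF assms, of r "- r"] scale_zero_left[OF assms] by (simp add: add_eq_0_iff)

lemma scale_minus_one:
  assumes "a \<in> pa_hom A m n" shows "pa_scale A (- 1) a = - a"
  using scale_minus_left[OF assms, of 1] scale_one[OF assms] by simp

lemma minus_hom: "a \<in> pa_hom A m n \<Longrightarrow> - a \<in> pa_hom A m n"
  by (metis scale_minus_one hom_scale)

lemma diff_hom: "a \<in> pa_hom A m n \<Longrightarrow> b \<in> pa_hom A m n \<Longrightarrow> a - b \<in> pa_hom A m n"
  by (metis diff_conv_add_uminus minus_hom hom_add)

lemma zero_hom: "a \<in> pa_hom A m n \<Longrightarrow> 0 \<in> pa_hom A m n"
  by (metis scale_zero_left hom_scale)

lemma scale_zero_right:
  assumes "a \<in> pa_hom A m n" shows "pa_scale A r 0 = 0"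
  by (metis assms mult_zero_right scale_mult scale_zero_left zero_hom)

lemma scale_minus_right:
  assumes "a \<in> pa_hom A m n" shows "pa_scale A r (- a) = - pa_scale A r a"
  by (metis assms hom_scale mult.commute scale_minus_one scale_mult)

lemma scale_diff_right:
  assumes "a \<in> pa_hom A m n" "b \<in> pa_hom A m n"
  shows "pa_scale A r (a - b) = pa_scale A r a - pa_scale A r b"
  using scale_add_right[OF assms(1) minus_hom[OF assms(2)], of r] scale_minus_right[OF assms(2)]
  by simp

lemma mul_minus_left:
  assumes "a \<in> pa_hom A n k" "b \<in> pa_hom A m n"
  shows "pa_mul A (- a) b = - pa_mul A a b"
  by (metis assms mul_hom mul_scale_left scale_minus_one)

lemma mul_minus_right:
  assumes "a \<in> pa_hom A n k" "b \<in> pa_hom A m n"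
  shows "pa_mul A a (- b) = - pa_mul A a b"
  by (metis assms mul_hom mul_scale_right scale_minus_one)

lemma mul_diff_left:
  assumes "a \<in> pa_hom A n k" "a' \<in> pa_hom A n k" "b \<in> pa_hom A m n"
  shows "pa_mul A (a - a') b = pa_mul A a b - pa_mul A a' b"
  using mul_add_left[OF assms(1) minus_hom[OF assms(2)] assms(3)] mul_minus_left[OF assms(2,3)]
  by simp

lemma mul_diff_right:
  assumes "a \<in> pa_hom A n k" "b \<in> pa_hom A m n" "b' \<in> pa_hom A m n"
  shows "pa_mul A a (b - b') = pa_mul A a b - pa_mul A a b'"
  using mul_add_right[OF assms(1) assms(2) minus_hom[OF assms(3)]] mul_minus_right[OF assms(1,3)]
  by simp

lemma mul_zero_left:
  assumes "a \<in> pa_hom A n k" "b \<in> pa_hom A m n" shows "pa_mul A 0 b = 0"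
  by (metis assms mul_hom mul_scale_left scale_zero_left zero_hom)

lemma mul_zero_right:
  assumes "a \<in> pa_hom A n k" "b \<in> pa_hom A m n" shows "pa_mul A a 0 = 0"
  by (metis assms mul_hom mul_scale_right scale_zero_left zero_hom)

lemma tens_diff_left:
  assumes "a \<in> pa_hom A m n" "a' \<in> pa_hom A m n" "b \<in> pa_hom A p q"
  shows "pa_tens A (a - a') b = pa_tens A a b - pa_tens A a' b"
proof -
  have "pa_tens A (- a') b = - pa_tens A a' b"
    by (metis assms(2,3) scale_minus_one tens_hom tens_scale_left)
  then show ?thesis
    using tens_add_left[OF assms(1) minus_hom[OF assms(2)] assms(3)] by simp
qed

lemma cupcap_hom: "pa_mul A (pa_cup A) (pa_cap A) \<in> pa_hom A 2 2"
  by (rule mul_hom[OF cup_hom cap_hom])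

lemma jw_hom: "jw A n \<in> pa_hom A n n"
proof (induction n rule: induct_nat_012)
  case (ge2 k)
  have T: "pa_tens A (jw A (Suc k)) (X A) \<in> pa_hom A (Suc (Suc k)) (Suc (Suc k))"
    using tens_hom[OF ge2(2) X_hom] by simp
  have E: "e A (Suc (Suc k)) (Suc k) \<in> pa_hom A (Suc (Suc k)) (Suc (Suc k))"
    unfolding e_def using tens_hom[OF tens_hom[OF id_hom cupcap_hom] id_hom, of k 0] by simp
  show ?case
    using diff_hom[OF T hom_scale[OF mul_hom[OF mul_hom[OF T E] T]]] by simp
qed (simp_all add: id_hom X_hom[unfolded One_nat_def])

lemma e_hom:
  assumes "0 < k" "k < n" shows "e A n k \<in> pa_hom A n n"
proof -
  obtain j where k: "k = Suc j" using assms(1) gr0_implies_Suc by blast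
  have "e A n (Suc j) \<in> pa_hom A (j + 2 + (n - j - 2)) (j + 2 + (n - j - 2))"
    unfolding e_def using tens_hom[OF tens_hom[OF id_hom cupcap_hom] id_hom, of j "n - j - 2"]
    by (simp add: numeral_2_eq_2)
  moreover have "j + 2 + (n - j - 2) = n" using assms k by simp
  ultimately show ?thesis by (simp only: k)
qed

lemma e_eq_cup_cap:
  "e A n (Suc j) = pa_mul A (pa_tens A (pa_tens A (pa_id A j) (pa_cup A)) (pa_id A (n - j - 2)))
                             (pa_tens A (pa_tens A (pa_id A j) (pa_cap A)) (pa_id A (n - j - 2)))"
  unfolding e_def
  by (simp add: interchange[OF tens_hom[OF id_hom cup_hom] tens_hom[OF id_hom cap_hom] id_hom id_hom]
      interchange[OF id_hom id_hom cup_hom cap_hom] id_left[OF id_hom] numeral_eq_Suc)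

lemma tens_id_mul:
  assumes "a \<in> pa_hom A n k" "b \<in> pa_hom A m n"
  shows "pa_tens A (pa_mul A a b) (pa_id A p) = pa_mul A (pa_tens A a (pa_id A p)) (pa_tens A b (pa_id A p))"
  by (simp add: interchange[OF assms id_hom id_hom] id_left[OF id_hom])

lemma jw_tens_id:
  "pa_tens A (jw A (Suc (Suc j))) (pa_id A k) =
     pa_tens A (jw A (Suc j)) (pa_id A (Suc k))
     - pa_scale A (of_nat (Suc j) / of_nat (Suc (Suc j)))
         (pa_mul A (pa_mul A (pa_tens A (jw A (Suc j)) (pa_id A (Suc k))) (e A (j + k + 2) (Suc j)))
                  (pa_tens A (jw A (Suc j)) (pa_id A (Suc k))))"
proof -
  let ?T = "pa_tens A (jw A (Suc j)) (X A)" and ?E = "e A (Suc (Suc j)) (Suc j)"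
  have T: "?T \<in> pa_hom A (Suc (Suc j)) (Suc (Suc j))"
    using tens_hom[OF jw_hom X_hom] by simp
  have E: "?E \<in> pa_hom A (Suc (Suc j)) (Suc (Suc j))"
    by (rule e_hom) simp_all
  have T_id: "pa_tens A ?T (pa_id A k) = pa_tens A (jw A (Suc j)) (pa_id A (Suc k))"
    unfolding tens_assoc[OF jw_hom X_hom id_hom] by (simp add: X_def tens_id)
  have E_id: "pa_tens A ?E (pa_id A k) = e A (j + k + 2) (Suc j)"
    unfolding e_def
    by (simp add: tens_assoc[OF tens_hom[OF id_hom cupcap_hom] id_hom id_hom] tens_id)
  show ?thesis
    unfolding jw.simps(3)
    by (simp add: tens_diff_left[OF T hom_scale[OF mul_hom[OF mul_hom[OF T E] T]] id_hom]
        tens_scale_left[OF mul_hom[OF mul_hom[OF T E] T] id_hom]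
        tens_id_mul[OF mul_hom[OF T E] T] tens_id_mul[OF T E] T_id E_id)
qed

lemma absorbs_sandwich:
  assumes T: "T \<in> pa_hom A n n" and E: "E \<in> pa_hom A n n" and S: "S \<in> pa_hom A n n"
    and "absorbs A T S" and ES: "pa_mul A E S = 0" and SE: "pa_mul A S E = 0"
  shows "absorbs A (T - pa_scale A c (pa_mul A (pa_mul A T E) T)) S"
proof -
  have TS: "pa_mul A T S = S" and ST: "pa_mul A S T = S"
    using \<open>absorbs A T S\<close> unfolding absorbs_def by auto
  have TE: "pa_mul A T E \<in> pa_hom A n n" by (rule mul_hom[OF T E])
  have M: "pa_mul A (pa_mul A T E) T \<in> pa_hom A n n" by (rule mul_hom[OF TE T])
  have MS: "pa_mul A (pa_mul A (pa_mul A T E) T) S = 0"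
    by (simp add: mul_assoc[OF TE T S] mul_assoc[OF T E S] TS ES mul_zero_right[OF T S])
  have SM: "pa_mul A S (pa_mul A (pa_mul A T E) T) = 0"
    by (simp add: mul_assoc[OF S TE T, symmetric] mul_assoc[OF S T E, symmetric] ST SE
        mul_zero_left[OF S T])
  show ?thesis
    unfolding absorbs_def
    by (simp add: mul_diff_left[OF T hom_scale[OF M] S] mul_diff_right[OF S T hom_scale[OF M]]
        mul_scale_left[OF M S] mul_scale_right[OF S M] MS SM TS ST scale_zero_right[OF S])
qed

lemma mul_eigen_sandwich:
  assumes U: "U \<in> pa_hom A n n" and E: "E \<in> pa_hom A n n" and Y: "Y \<in> pa_hom A n n"
    and "mul_eigen A Y r U"
  shows "mul_eigen A Y r (U - pa_scale A c (pa_mul A (pa_mul A U E) U))"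
proof -
  have UY: "pa_mul A U Y = pa_scale A r U" and YU: "pa_mul A Y U = pa_scale A r U"
    using \<open>mul_eigen A Y r U\<close> unfolding mul_eigen_def by auto
  have UE: "pa_mul A U E \<in> pa_hom A n n" by (rule mul_hom[OF U E])
  have M: "pa_mul A (pa_mul A U E) U \<in> pa_hom A n n" by (rule mul_hom[OF UE U])
  have MY: "pa_mul A (pa_mul A (pa_mul A U E) U) Y = pa_scale A r (pa_mul A (pa_mul A U E) U)"
    by (simp add: mul_assoc[OF UE U Y] UY mul_scale_right[OF UE U])
  have YM: "pa_mul A Y (pa_mul A (pa_mul A U E) U) = pa_scale A r (pa_mul A (pa_mul A U E) U)"
    by (simp add: mul_assoc[OF Y UE U, symmetric] mul_assoc[OF Y U E, symmetric] YU
        mul_scale_left[OF U E] mul_scale_left[OF UE U])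
  show ?thesis
    unfolding mul_eigen_def
    by (simp add: mul_diff_left[OF U hom_scale[OF M] Y] mul_diff_right[OF Y U hom_scale[OF M]]
        mul_scale_left[OF M Y] mul_scale_right[OF Y M] MY YM UY YU
        scale_diff_right[OF U hom_scale[OF M]] scale_mult[OF M, symmetric] mult.commute)
qed

lemma mul_eigen_tens_id:
  assumes U: "U \<in> pa_hom A m m" and Y: "Y \<in> pa_hom A m m" and "mul_eigen A Y r U"
  shows "mul_eigen A (pa_tens A Y (pa_id A k)) r (pa_tens A U (pa_id A k))"
  using \<open>mul_eigen A Y r U\<close> unfolding mul_eigen_def
  by (simp add: interchange[OF U Y id_hom id_hom] interchange[OF Y U id_hom id_hom]
      id_left[OF id_hom] tens_scale_left[OF U id_hom])

text \<open>The hypotheses on \<alpha>, \<beta> say that (\<alpha>, \<beta>) is an eigenvector, for r, of the matrix of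
  multiplication by S on the span of f and S.\<close>

lemma mul_eigen_span:
  assumes f: "f \<in> pa_hom A n n" and S: "S \<in> pa_hom A n n" and "absorbs A f S"
    and SS: "pa_mul A S S = pa_scale A s f + pa_scale A t S"
    and "\<beta> * s = r * \<alpha>" and "\<alpha> + \<beta> * t = r * \<beta>"
  shows "mul_eigen A S r (pa_scale A \<alpha> f + pa_scale A \<beta> S)"
proof -
  have fS: "pa_mul A f S = S" and Sf: "pa_mul A S f = S"
    using \<open>absorbs A f S\<close> unfolding absorbs_def by auto
  have "pa_scale A \<alpha> S + pa_scale A \<beta> (pa_mul A S S)
        = pa_scale A (\<beta> * s) f + pa_scale A (\<alpha> + \<beta> * t) S"
    by (simp add: SS scale_add_right[OF hom_scale[OF f] hom_scale[OF S]] scale_mult[OF f]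
        scale_mult[OF S] scale_add_left[OF S] ac_simps)
  also have "\<dots> = pa_scale A r (pa_scale A \<alpha> f + pa_scale A \<beta> S)"
    by (simp add: scale_add_right[OF hom_scale[OF f] hom_scale[OF S]] scale_mult[OF f, symmetric]
        scale_mult[OF S, symmetric] assms(5,6))
  finally have eq: "pa_scale A \<alpha> S + pa_scale A \<beta> (pa_mul A S S)
                    = pa_scale A r (pa_scale A \<alpha> f + pa_scale A \<beta> S)" .
  show ?thesis
    unfolding mul_eigen_def
    by (simp add: mul_add_left[OF hom_scale[OF f] hom_scale[OF S] S]
        mul_add_right[OF S hom_scale[OF f] hom_scale[OF S]]
        mul_scale_left[OF f S] mul_scale_left[OF S S] mul_scale_right[OF S f]
        mul_scale_right[OF S S] fS Sf eq)
qed

end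

context planar_S
begin

lemma S_kills_e:
  assumes "j \<le> 2"
  shows "pa_mul A (e A 4 (Suc j)) S = 0" and "pa_mul A S (e A 4 (Suc j)) = 0"
proof -
  let ?cup = "pa_tens A (pa_tens A (pa_id A j) (pa_cup A)) (pa_id A (2 - j))"
    and ?cap = "pa_tens A (pa_tens A (pa_id A j) (pa_cap A)) (pa_id A (2 - j))"
  have e: "e A 4 (Suc j) = pa_mul A ?cup ?cap"
    using e_eq_cup_cap[of 4 j] by simp
  have cup: "?cup \<in> pa_hom A 2 4"
    using tens_hom[OF tens_hom[OF id_hom cup_hom] id_hom, of j "2 - j"] assms by simp
  have cap: "?cap \<in> pa_hom A 4 2"
    using tens_hom[OF tens_hom[OF id_hom cap_hom] id_hom, of j "2 - j"] assms by simp
  show "pa_mul A (e A 4 (Suc j)) S = 0"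
    unfolding e mul_assoc[OF cup cap S_hom] S_uncappable[OF assms]
    by (rule mul_zero_right[OF cup cap])
  show "pa_mul A S (e A 4 (Suc j)) = 0"
    unfolding e mul_assoc[OF S_hom cup cap, symmetric] S_uncuppable[OF assms]
    by (rule mul_zero_left[OF cup cap])
qed

lemma jw_tens_id_absorbs_S:
  "j \<le> 3 \<Longrightarrow> absorbs A (pa_tens A (jw A (Suc j)) (pa_id A (3 - j))) S"
proof (induction j)
  case 0
  have "pa_tens A (jw A (Suc 0)) (pa_id A 3) = pa_id A 4"
    using tens_id[of 1 3] by (simp add: X_def)
  then show ?case
    by (simp add: absorbs_def id_left[OF S_hom] id_right[OF S_hom])
next
  case (Suc j)
  then have j: "j \<le> 2" by simp
  have T: "pa_tens A (jw A (Suc j)) (pa_id A (3 - j)) \<in> pa_hom A 4 4"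
    using tens_hom[OF jw_hom id_hom, of "Suc j" "3 - j"] j by simp
  have E: "e A 4 (Suc j) \<in> pa_hom A 4 4"
    by (rule e_hom) (use j in simp_all)
  have IH: "absorbs A (pa_tens A (jw A (Suc j)) (pa_id A (3 - j))) S"
    using Suc by simp
  have widths: "Suc (2 - j) = 3 - j" "j + (2 - j) + 2 = 4"
    using j by simp_all
  have "absorbs A (pa_tens A (jw A (Suc (Suc j))) (pa_id A (2 - j))) S"
    unfolding jw_tens_id widths
    by (rule absorbs_sandwich[OF T E S_hom IH S_kills_e[OF j]])
  then show ?case by simp
qed

lemma jw4_absorbs_S: "absorbs A (jw A 4) S"
proof -
  have "absorbs A (pa_tens A (jw A 4) (pa_id A 0)) S"
    using jw_tens_id_absorbs_S[of 3] by simp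
  then show ?thesis
    by (simp add: tens_unit_right[OF jw_hom])
qed

lemma P4_hom: "P4 A S \<in> pa_hom A 4 4"
  unfolding P4_def by (rule diff_hom[OF hom_scale[OF jw_hom] hom_scale[OF S_hom]])

lemma P5_hom: "P5 A S \<in> pa_hom A 5 5"
proof -
  have U: "pa_tens A (P4 A S) (X A) \<in> pa_hom A 5 5"
    using tens_hom[OF P4_hom X_hom] by simp
  have E: "e A 5 4 \<in> pa_hom A 5 5"
    by (rule e_hom) simp_all
  show ?thesis
    unfolding P5_def by (rule diff_hom[OF U hom_scale[OF mul_hom[OF mul_hom[OF U E] U]]])
qed

lemma S_square_span: "pa_mul A S S = pa_scale A 6 (jw A 4) + pa_scale A 1 S"
  using S_square scale_one[OF S_hom] by simp

lemma P4_eigen: "mul_eigen A S (-2) (P4 A S)"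
proof -
  have "P4 A S = pa_scale A (3/5) (jw A 4) + pa_scale A (-1/5) S"
    unfolding P4_def using scale_minus_left[OF S_hom, of "1/5"] by simp
  then show ?thesis
    using mul_eigen_span[OF jw_hom S_hom jw4_absorbs_S S_square_span] by simp
qed

lemma Q4_eigen: "mul_eigen A S 3 (Q4 A S)"
  unfolding Q4_def using mul_eigen_span[OF jw_hom S_hom jw4_absorbs_S S_square_span] by simp

lemma P5_eigen: "mul_eigen A (pa_tens A S (X A)) (-2) (P5 A S)"
proof -
  have U: "pa_tens A (P4 A S) (X A) \<in> pa_hom A 5 5" and Y: "pa_tens A S (X A) \<in> pa_hom A 5 5"
    using tens_hom[OF P4_hom X_hom] tens_hom[OF S_hom X_hom] by simp_all
  have E: "e A 5 4 \<in> pa_hom A 5 5"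
    by (rule e_hom) simp_all
  have "mul_eigen A (pa_tens A S (X A)) (-2) (pa_tens A (P4 A S) (X A))"
    using mul_eigen_tens_id[OF P4_hom S_hom P4_eigen, of 1] by (simp add: X_def)
  then show ?thesis
    unfolding P5_def by (rule mul_eigen_sandwich[OF U E Y])
qed

lemma P6_eigen: "mul_eigen A (pa_tens A S (pa_tens A (X A) (X A))) (-2) (P6 A S)"
proof -
  have Y: "pa_tens A S (X A) \<in> pa_hom A 5 5"
    using tens_hom[OF S_hom X_hom] by simp
  have U': "pa_tens A (P5 A S) (X A) \<in> pa_hom A 6 6"
    and Y': "pa_tens A (pa_tens A S (X A)) (X A) \<in> pa_hom A 6 6"
    using tens_hom[OF P5_hom X_hom] tens_hom[OF Y X_hom] by simp_all
  have E: "e A 6 5 \<in> pa_hom A 6 6"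
    by (rule e_hom) simp_all
  have "mul_eigen A (pa_tens A (pa_tens A S (X A)) (X A)) (-2) (pa_tens A (P5 A S) (X A))"
    using mul_eigen_tens_id[OF P5_hom Y P5_eigen, of 1] by (simp add: X_def)
  then have "mul_eigen A (pa_tens A (pa_tens A S (X A)) (X A)) (-2) (P6 A S)"
    unfolding P6_def by (rule mul_eigen_sandwich[OF U' E Y'])
  then show ?thesis
    by (simp add: tens_assoc[OF S_hom X_hom X_hom])
qed

end

theorem lemma4p75:
  fixes A :: "'m::ab_group_add pa_ops" and S :: 'm
  assumes "planar_S A S"
  shows "(pa_mul A (P4 A S) S = pa_scale A (-2) (P4 A S) \<and> pa_mul A S (P4 A S) = pa_scale A (-2) (P4 A S)) \<and>
         (pa_mul A (Q4 A S) S = pa_scale A 3 (Q4 A S) \<and> pa_mul A S (Q4 A S) = pa_scale A 3 (Q4 A S)) \<and>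
         (pa_mul A (P5 A S) (pa_tens A S (X A)) = pa_scale A (-2) (P5 A S) \<and>
         pa_mul A (pa_tens A S (X A)) (P5 A S) = pa_scale A (-2) (P5 A S)) \<and>
         (pa_mul A (P6 A S) (pa_tens A S (pa_tens A (X A) (X A))) = pa_scale A (-2) (P6 A S) \<and>
         pa_mul A (pa_tens A S (pa_tens A (X A) (X A))) (P6 A S) = pa_scale A (-2) (P6 A S))"
proof -
  interpret planar_S A S by (fact assms)
  show ?thesis
    using P4_eigen Q4_eigen P5_eigen P6_eigen unfolding mul_eigen_def by blast
qed

end
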